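(* Let $\bm y=\bm X\bm\beta+\bm z$, where $\bm X\in\mathbb{R}^{n\times p}$ is deterministic of full column rank with unit-norm columns $\bm x_1,\dots,\bm x_p$, $\bm\beta\in\mathbb{R}^p$, and $\bm z\sim N_n(\bm 0,\sigma^2\bm I_n)$. Let $\bm\Sigma=\bm X^\top\bm X$ and, for a fixed $\lambda>0$, $\bm\Sigma_\lambda=\bm\Sigma+\lambda\bm I_p$. Let $\bm s\in\mathbb{R}^p$ have nonnegative entries with $\bm\Sigma-\operatorname{diag}(\bm s)$ positive semidefinite, and let $\widetilde{\bm X}=[\widetilde{\bm x}_1,\dots,\widetilde{\bm x}_p]\in\mathbb{R}^{n\times p}$ be a fixed matrix with $\widetilde{\bm X}^\top\bm X=\bm\Sigma-\operatorname{diag}(\bm s)$ and $\widetilde{\bm x}_j^\top\widetilde{\bm x}_j=1$ for all $j$. Define $\widehat{\bm\beta}_\lambda=\bm\Sigma_\lambda^{-1}\bm X^\top\bm y$ and $\widetilde\beta_{\lambda j}=\widehat\beta_{\lambda j}+[\bm\Sigma_\lambda^{-1}]_{jj}(\widetilde{\bm x}_j^\top\bm y-\bm x_j^\top\bm y)$. If $\beta_j=0$, then $(\widehat\beta_{\lambda j},\widetilde\beta_{\lambda j})\stackrel{d}{=}(\widetilde\beta_{\lambda j},\widehat\beta_{\lambda j})$.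
   Context: $[\bm A]_{jj}$ denotes the $j$-th diagonal entry of a matrix $\bm A$; $\stackrel{d}{=}$ denotes equality in distribution. *)

theory Defs
  imports "HOL-Analysis.Analysis" "HOL-Probability.Probability"
begin

definition diag_mat :: "real ^ 'n \<Rightarrow> real ^ 'n ^ 'n" where
  "diag_mat s = (\<chi> i j. if i = j then s $ i else 0)"

definition psd_mat :: "real ^ 'n ^ 'n \<Rightarrow> bool" where
  "psd_mat A \<longleftrightarrow> transpose A = A \<and> (\<forall>v. 0 \<le> v \<bullet> (A *v v))"

definition iso_gauss_density :: "real \<Rightarrow> real ^ 'n \<Rightarrow> ennreal" where
  "iso_gauss_density \<sigma> x = ennreal (\<Prod>i\<in>UNIV. normal_density 0 \<sigma> (x $ i))"

end

theory Submission
  imports Defs "HOL-Library.Countable"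
begin

(* Write a = X [Sigma_lam^-1]_j and d = xt_j - x_j.  Then bhat_j = a.y and
   btil_j = b.y with b = a + [Sigma_lam^-1]_jj d.  The knockoff condition gives
   X^T d = -s_j e_j, so d.(X beta) = -s_j beta_j = 0 and both estimators have the
   same mean a.(X beta); together with |x_j| = |xt_j| = 1 it also gives |a| = |b|.
   The reflection exchanging a and b is orthogonal, so it leaves the isotropic
   Gaussian law of z invariant, and composing with it swaps the two estimators. *)

lemma emeasure_lborel_box_cart:
  fixes l u :: "real ^ 'n"
  shows "emeasure lborel (box l u) = (if \<forall>k. l $ k \<le> u $ k then \<Prod>k\<in>UNIV. u $ k - l $ k else 0)"
proof -
  have "(\<forall>b\<in>Basis. l \<bullet> b \<le> u \<bullet> b) \<longleftrightarrow> (\<forall>k. l $ k \<le> u $ k)"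
    by (auto simp: Basis_vec_def cart_eq_inner_axis)
  moreover have "(\<Prod>b\<in>Basis. (u - l) \<bullet> b) = (\<Prod>k\<in>UNIV. u $ k - l $ k)"
    by (simp add: Basis_vec_def cart_eq_inner_axis axis_eq_axis prod.UNION_disjoint inner_diff_left)
  ultimately show ?thesis by (simp add: emeasure_lborel_box_eq)
qed

lemma orthogonal_transformation_permute_coordinates:
  fixes \<pi> :: "'b::finite \<Rightarrow> 'a::finite"
  assumes "bij \<pi>"
  shows "orthogonal_transformation (\<lambda>x::real ^ 'a. (\<chi> k. x $ \<pi> k) :: real ^ 'b)"
proof -
  have "(\<Sum>k\<in>UNIV. v $ \<pi> k * w $ \<pi> k) = (\<Sum>i\<in>UNIV. v $ i * w $ i)" for v w :: "real ^ 'a"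
    using sum.reindex_bij_betw[OF assms, of "\<lambda>i. v $ i * w $ i"] by simp
  then show ?thesis
    by (auto simp: orthogonal_transformation_def linear_iff inner_vec_def vec_eq_iff)
qed

lemma lborel_permute_coordinates:
  fixes \<pi> :: "'b::finite \<Rightarrow> 'a::finite"
  assumes \<pi>: "bij \<pi>"
  shows "distr lborel borel (\<lambda>x::real ^ 'a. (\<chi> k. x $ \<pi> k) :: real ^ 'b) = lborel"
proof (rule lborel_eqI[symmetric])
  let ?P = "\<lambda>x::real ^ 'a. (\<chi> k. x $ \<pi> k) :: real ^ 'b"
  let ?\<rho> = "inv \<pi>"
  have \<rho>: "bij ?\<rho>" using \<pi> by (rule bij_imp_bij_inv)
  have meas: "?P \<in> borel_measurable borel"
    by (intro borel_measurable_continuous_onI continuous_on_vec_lambda continuous_intros)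
  fix l u :: "real ^ 'b"
  assume le: "\<And>b. b \<in> Basis \<Longrightarrow> l \<bullet> b \<le> u \<bullet> b"
  have "?P -` box l u = box (\<chi> i. l $ ?\<rho> i) (\<chi> i. u $ ?\<rho> i)"
    using \<pi> by (auto simp: mem_box_cart bij_inv_eq_iff) (metis bij_inv_eq_iff)+
  then have "emeasure (distr lborel borel ?P) (box l u)
      = (if \<forall>i. l $ ?\<rho> i \<le> u $ ?\<rho> i then \<Prod>i\<in>UNIV. u $ ?\<rho> i - l $ ?\<rho> i else 0)"
    using meas by (simp add: emeasure_distr emeasure_lborel_box_cart)
  also have "\<dots> = emeasure lborel (box l u)"
    using prod.reindex_bij_betw[OF \<rho>, of "\<lambda>k. u $ k - l $ k"] \<rho>
    by (simp add: emeasure_lborel_box_cart) (metis bij_pointE)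
  finally show "emeasure (distr lborel borel ?P) (box l u) = (\<Prod>b\<in>Basis. (u - l) \<bullet> b)"
    using le by simp
qed simp

lemma orthogonal_transformation_borel_measurable:
  fixes H :: "'a::euclidean_space \<Rightarrow> 'b::euclidean_space"
  assumes "orthogonal_transformation H"
  shows "H \<in> borel_measurable borel"
  using orthogonal_transformation_linear[OF assms]
  by (intro borel_measurable_continuous_onI linear_continuous_on) (simp add: linear_linear)

lemma lborel_orthogonal_transformation_wellorder:
  fixes H :: "real ^ 'n::{finite,wellorder} \<Rightarrow> real ^ 'n::_"
  assumes H: "orthogonal_transformation H"
  shows "distr lborel borel H = lborel"
proof (rule lborel_eqI[symmetric])
  have meas: "H \<in> borel_measurable borel"
    using H by (rule orthogonal_transformation_borel_measurable)
  have H': "orthogonal_transformation (inv H)"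
    using H by (rule orthogonal_transformation_inv)
  fix l u :: "real ^ 'n::_"
  assume le: "\<And>b. b \<in> Basis \<Longrightarrow> l \<bullet> b \<le> u \<bullet> b"
  have "H -` box l u = inv H ` box l u"
    using orthogonal_transformation_bij[OF H] by (simp add: bij_vimage_eq_inv_image)
  then have "emeasure (distr lborel borel H) (box l u) = emeasure lebesgue (inv H ` box l u)"
    using meas measurable_sets_borel[OF meas, of "box l u"] by (simp add: emeasure_distr)
  also have "\<dots> = measure lebesgue (box l u)"
    using measurable_orthogonal_image[OF H', of "box l u"] measure_orthogonal_image[OF H', of "box l u"]
    by (simp add: emeasure_eq_measure2)
  also have "\<dots> = (\<Prod>b\<in>Basis. (u - l) \<bullet> b)"
    using le by (simp add: emeasure_eq_measure2[symmetric])
  finally show "emeasure (distr lborel borel H) (box l u) = (\<Prod>b\<in>Basis. (u - l) \<bullet> b)" .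
qed simp

(* The library proves invariance of Lebesgue measure under orthogonal maps only for
   index types of sort wellorder; a wellordered copy of the index type transfers it. *)
typedef ('a::finite) wellordered = "UNIV :: 'a set"
  by simp

instance wellordered :: (finite) finite
  by standard (metis finite finite_imageI type_definition.Abs_image[OF type_definition_wellordered])

instantiation wellordered :: (finite) linorder
begin
definition less_eq_wellordered :: "'a wellordered \<Rightarrow> 'a wellordered \<Rightarrow> bool"
  where "x \<le> y \<longleftrightarrow> to_nat (Rep_wellordered x) \<le> to_nat (Rep_wellordered y)"
definition less_wellordered :: "'a wellordered \<Rightarrow> 'a wellordered \<Rightarrow> bool"
  where "x < y \<longleftrightarrow> to_nat (Rep_wellordered x) < to_nat (Rep_wellordered y)"
instance
proof
  fix x y z :: "'a wellordered"
  show "x < y \<longleftrightarrow> x \<le> y \<and> \<not> y \<le> x" "x \<le> x" "x \<le> y \<or> y \<le> x"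
    unfolding less_eq_wellordered_def less_wellordered_def by auto
  show "x \<le> y \<Longrightarrow> y \<le> z \<Longrightarrow> x \<le> z"
    unfolding less_eq_wellordered_def by (rule order_trans)
  show "x \<le> y \<Longrightarrow> y \<le> x \<Longrightarrow> x = y"
    unfolding less_eq_wellordered_def by (metis Rep_wellordered_inject antisym inj_eq inj_to_nat)
qed
end

instance wellordered :: (finite) wellorder
proof
  fix P :: "'a wellordered \<Rightarrow> bool" and x
  assume step: "\<And>x. (\<And>y. y < x \<Longrightarrow> P y) \<Longrightarrow> P x"
  show "P x"
    by (induction x rule: measure_induct_rule[of "\<lambda>x. to_nat (Rep_wellordered x)"])
       (rule step, simp add: less_wellordered_def)
qed

lemma lborel_orthogonal_transformation:
  fixes H :: "real ^ 'n::finite \<Rightarrow> real ^ 'n"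
  assumes H: "orthogonal_transformation H"
  shows "distr lborel borel H = lborel"
proof -
  define P :: "real ^ 'n \<Rightarrow> real ^ 'n wellordered" where "P x = (\<chi> k. x $ Rep_wellordered k)" for x
  define Q :: "real ^ 'n wellordered \<Rightarrow> real ^ 'n" where "Q y = (\<chi> i. y $ Abs_wellordered i)" for y
  have bij_Rep: "bij Rep_wellordered" and bij_Abs: "bij Abs_wellordered"
    by (metis Abs_wellordered_inverse Rep_wellordered_inverse UNIV_I bij_betw_byWitness subsetI)+
  have P: "orthogonal_transformation P" "distr lborel borel P = lborel"
    unfolding P_def[abs_def] using bij_Rep
    by (auto intro: orthogonal_transformation_permute_coordinates lborel_permute_coordinates)
  have Q: "orthogonal_transformation Q" "distr lborel borel Q = lborel"
    unfolding Q_def[abs_def] using bij_Abs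
    by (auto intro: orthogonal_transformation_permute_coordinates lborel_permute_coordinates)
  have PHQ: "orthogonal_transformation (P \<circ> H \<circ> Q)"
    using P Q H by (intro orthogonal_transformation_compose)
  have meas: "P \<in> borel_measurable borel" "Q \<in> borel_measurable borel"
    "P \<circ> H \<circ> Q \<in> borel_measurable borel"
    using P(1) Q(1) PHQ by (simp_all add: orthogonal_transformation_borel_measurable)
  have "lborel = distr (distr (distr lborel borel P) borel (P \<circ> H \<circ> Q)) borel Q"
    using P(2) Q(2) PHQ by (simp add: lborel_orthogonal_transformation_wellorder)
  also have "\<dots> = distr lborel borel (\<lambda>x. Q (P (H (Q (P x)))))"
    using meas by (simp add: distr_distr) (simp add: comp_def)
  also have "(\<lambda>x. Q (P (H (Q (P x))))) = H"
    by (simp add: fun_eq_iff P_def Q_def Rep_wellordered_inverse Abs_wellordered_inverse)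
  finally show ?thesis ..
qed

lemma iso_gauss_density_inner:
  fixes x :: "real ^ 'n"
  shows "iso_gauss_density \<sigma> x
    = ennreal ((1 / sqrt (2 * pi * \<sigma>\<^sup>2)) ^ CARD('n) * exp (- (x \<bullet> x) / (2 * \<sigma>\<^sup>2)))"
proof -
  have "(\<Prod>i\<in>UNIV. normal_density 0 \<sigma> (x $ i))
      = (\<Prod>i\<in>UNIV. 1 / sqrt (2 * pi * \<sigma>\<^sup>2) * exp (- (x $ i)\<^sup>2 / (2 * \<sigma>\<^sup>2)))"
    by (simp add: normal_density_def)
  also have "\<dots> = (1 / sqrt (2 * pi * \<sigma>\<^sup>2)) ^ CARD('n) * exp (\<Sum>i\<in>UNIV. - (x $ i)\<^sup>2 / (2 * \<sigma>\<^sup>2))"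
    by (simp only: prod.distrib exp_sum[OF finite] prod_constant card_UNIV_def)
  also have "(\<Sum>i\<in>UNIV. - (x $ i)\<^sup>2 / (2 * \<sigma>\<^sup>2)) = - (x \<bullet> x) / (2 * \<sigma>\<^sup>2)"
    by (simp add: inner_vec_def sum_divide_distrib[symmetric] sum_negf power2_eq_square)
  finally show ?thesis by (simp add: iso_gauss_density_def)
qed

lemma iso_gauss_density_orthogonal_transformation:
  fixes H :: "real ^ 'n \<Rightarrow> real ^ 'n"
  assumes "orthogonal_transformation H"
  shows "iso_gauss_density \<sigma> (H x) = iso_gauss_density \<sigma> x"
  using assms by (simp add: iso_gauss_density_inner orthogonal_transformation_def)

lemma borel_measurable_iso_gauss_density:
  "iso_gauss_density \<sigma> \<in> borel_measurable (borel :: (real ^ 'n) measure)"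
  unfolding iso_gauss_density_inner by measurable

lemma distr_density_lborel_orthogonal_transformation:
  fixes H :: "real ^ 'n \<Rightarrow> real ^ 'n"
  assumes H: "orthogonal_transformation H"
    and g: "g \<in> borel_measurable borel" and g_H: "\<And>x. g (H x) = g x"
  shows "distr (density lborel g) borel H = density lborel g"
proof -
  have H': "orthogonal_transformation (inv H)"
    using H by (rule orthogonal_transformation_inv)
  have H_inv: "H (inv H x) = x" for x
    using orthogonal_transformation_surj[OF H] by (simp add: surj_f_inv_f)
  have "distr (density (distr lborel borel (inv H)) g) lborel H = density lborel (g \<circ> inv H)"
    using orthogonal_transformation_borel_measurable[OF H] orthogonal_transformation_borel_measurable[OF H']
    by (intro distr_density_distr) (simp_all add: H_inv g)
  moreover have "g \<circ> inv H = g"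
    using g_H[of "inv H _"] by (simp add: fun_eq_iff H_inv)
  moreover have "distr (density lborel g) borel H = distr (density lborel g) lborel H"
    by (rule distr_cong) simp_all
  ultimately show ?thesis
    by (simp add: lborel_orthogonal_transformation[OF H'])
qed

lemma distributed_iso_gauss_orthogonal_transformation:
  fixes H :: "real ^ 'n \<Rightarrow> real ^ 'n" and z :: "'w \<Rightarrow> real ^ 'n"
  assumes z: "distributed M lborel z (iso_gauss_density \<sigma>)"
    and H: "orthogonal_transformation H"
  shows "distr M borel (\<lambda>\<omega>. H (z \<omega>)) = distr M borel z"
proof -
  have z_meas: "z \<in> measurable M borel"
    using distributed_measurable[OF z] by simp
  have "distr M borel z = distr M lborel z"
    by (rule distr_cong) simp_all
  also have "\<dots> = density lborel (iso_gauss_density \<sigma>)"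
    using z by (rule distributed_distr_eq_density)
  finally have law: "distr M borel z = density lborel (iso_gauss_density \<sigma>)" .
  have "distr M borel (\<lambda>\<omega>. H (z \<omega>)) = distr (distr M borel z) borel H"
    using z_meas orthogonal_transformation_borel_measurable[OF H] by (simp add: distr_distr comp_def)
  also have "\<dots> = distr M borel z"
    unfolding law using H borel_measurable_iso_gauss_density
    by (rule distr_density_lborel_orthogonal_transformation)
       (rule iso_gauss_density_orthogonal_transformation[OF H])
  finally show ?thesis .
qed

definition reflect_along :: "'a::real_inner \<Rightarrow> 'a \<Rightarrow> 'a"
  where "reflect_along u x = x - (2 * (u \<bullet> x) / (u \<bullet> u)) *\<^sub>R u"

lemma orthogonal_transformation_reflect_along: "orthogonal_transformation (reflect_along u)"
proof (cases "u = 0")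
  case True
  then have "reflect_along u = (\<lambda>x. x)"
    by (simp add: fun_eq_iff reflect_along_def)
  then show ?thesis by simp
next
  case False
  then have "u \<bullet> u \<noteq> 0" by simp
  then have "reflect_along u v \<bullet> reflect_along u w = v \<bullet> w" for v w
    by (simp add: reflect_along_def inner_diff_left inner_diff_right inner_commute field_simps power2_eq_square)
  moreover have "linear (reflect_along u)"
    by (rule linearI) (simp_all add: reflect_along_def inner_add_right algebra_simps add_divide_distrib)
  ultimately show ?thesis by (simp add: orthogonal_transformation_def)
qed

lemma reflect_along_uminus: "reflect_along (- u) = reflect_along u"
  by (simp add: fun_eq_iff reflect_along_def)

lemma inner_reflect_along_diff:
  fixes a b :: "'a::real_inner"
  assumes "a \<bullet> a = b \<bullet> b"
  shows "a \<bullet> reflect_along (a - b) x = b \<bullet> x"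
proof (cases "a = b")
  case True
  then show ?thesis by (simp add: reflect_along_def)
next
  case False
  define u where "u = a - b"
  have uu: "u \<bullet> u \<noteq> 0"
    using False by (simp add: u_def)
  have ua: "2 * (u \<bullet> a) = u \<bullet> u"
    using assms by (simp add: u_def inner_diff_left inner_diff_right inner_commute)
  have "a \<bullet> reflect_along u x = a \<bullet> x - (u \<bullet> x) * (2 * (u \<bullet> a)) / (u \<bullet> u)"
    by (simp add: reflect_along_def inner_diff_right inner_commute)
  also have "\<dots> = a \<bullet> x - u \<bullet> x"
    using uu ua by simp
  also have "\<dots> = b \<bullet> x"
    by (simp add: u_def inner_diff_left)
  finally show ?thesis by (simp add: u_def)
qed

lemma distr_iso_gauss_inner_swap:
  fixes a b :: "real ^ 'n" and z :: "'w \<Rightarrow> real ^ 'n"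
  assumes z: "distributed M lborel z (iso_gauss_density \<sigma>)"
    and ab: "a \<bullet> a = b \<bullet> b"
  shows "distr M borel (\<lambda>\<omega>. (m + a \<bullet> z \<omega>, m + b \<bullet> z \<omega>))
       = distr M borel (\<lambda>\<omega>. (m + b \<bullet> z \<omega>, m + a \<bullet> z \<omega>))"
proof -
  define H where "H = reflect_along (a - b)"
  define F where "F w = (m + a \<bullet> w, m + b \<bullet> w)" for w :: "real ^ 'n"
  have H: "orthogonal_transformation H"
    by (simp add: H_def orthogonal_transformation_reflect_along)
  have "F (H w) = (m + b \<bullet> w, m + a \<bullet> w)" for w
    using inner_reflect_along_diff[OF ab] inner_reflect_along_diff[OF ab[symmetric]]
    by (simp add: F_def H_def reflect_along_uminus[of "a - b", simplified])
  moreover have F_meas: "F \<in> borel_measurable borel"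
    unfolding F_def by (intro borel_measurable_continuous_onI continuous_intros)
  moreover have z_meas: "z \<in> measurable M borel"
    using distributed_measurable[OF z] by simp
  ultimately have "distr M borel (\<lambda>\<omega>. (m + b \<bullet> z \<omega>, m + a \<bullet> z \<omega>))
      = distr (distr M borel (\<lambda>\<omega>. H (z \<omega>))) borel F"
    using orthogonal_transformation_borel_measurable[OF H] by (simp add: distr_distr comp_def)
  also have "\<dots> = distr M borel (\<lambda>\<omega>. F (z \<omega>))"
    using F_meas z_meas
    by (simp add: distributed_iso_gauss_orthogonal_transformation[OF z H] distr_distr comp_def)
  finally show ?thesis by (simp add: F_def)
qed

lemma inner_matrix_vector_transpose:
  fixes A :: "real ^ 'm ^ 'n"
  shows "(A *v x) \<bullet> y = x \<bullet> (transpose A *v y)"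
  by (metis dot_lmul_matrix transpose_matrix_vector transpose_transpose)

lemma transpose_matrix_mult_component:
  fixes A :: "real ^ 'm ^ 'n" and B :: "real ^ 'k ^ 'n"
  shows "(transpose A ** B) $ i $ k = column i A \<bullet> column k B"
  by (simp add: matrix_matrix_mult_def transpose_def column_def inner_vec_def mult.commute)

lemma transpose_matrix_vector_component:
  fixes A :: "real ^ 'm ^ 'n"
  shows "(transpose A *v v) $ k = column k A \<bullet> v"
  by (simp add: matrix_vector_mult_def transpose_def column_def inner_vec_def mult.commute)

lemma knockoff_transpose_column_diff:
  fixes X Xt :: "real ^ 'p ^ 'n"
  assumes "transpose Xt ** X = transpose X ** X - diag_mat s"
  shows "transpose X *v (column j Xt - column j X) = - s $ j *\<^sub>R axis j 1"
unfolding vec_eq_iff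
proof
  fix k
  have "(transpose X *v (column j Xt - column j X)) $ k
      = (transpose Xt ** X) $ j $ k - (transpose X ** X) $ j $ k"
    by (simp only: transpose_matrix_vector_component transpose_matrix_mult_component
        inner_diff_right) (simp add: inner_commute)
  also have "\<dots> = - diag_mat s $ j $ k"
    using assms by simp
  finally show "(transpose X *v (column j Xt - column j X)) $ k = (- s $ j *\<^sub>R axis j 1) $ k"
    by (simp add: diag_mat_def axis_def)
qed

lemma knockoff_column_diff_inner_self:
  fixes X Xt :: "real ^ 'p ^ 'n"
  assumes "transpose Xt ** X = transpose X ** X - diag_mat s"
    and "norm (column j X) = 1" and "column j Xt \<bullet> column j Xt = 1"
  shows "(column j Xt - column j X) \<bullet> (column j Xt - column j X) = 2 * s $ j"
proof -
  have xx: "column j X \<bullet> column j X = 1"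
    using assms(2) by (simp add: power2_norm_eq_inner[symmetric])
  have "column j Xt \<bullet> column j X = (transpose Xt ** X) $ j $ j"
    by (simp add: transpose_matrix_mult_component)
  also have "\<dots> = 1 - s $ j"
    using assms(1) xx by (simp add: transpose_matrix_mult_component diag_mat_def)
  finally show ?thesis
    using xx assms(3) by (simp add: inner_diff_left inner_diff_right inner_commute)
qed

theorem corollary2p1:
  fixes M :: "'w measure"
    and X Xt :: "real ^ 'p ^ 'n"
    and \<beta> s :: "real ^ 'p"
    and z :: "'w \<Rightarrow> real ^ 'n"
    and \<sigma> lam :: real
    and j :: 'p
  assumes "prob_space M"
    and "\<sigma> > 0"
    and "distributed M lborel z (iso_gauss_density \<sigma>)"
    and "rank X = CARD('p)"
    and "\<forall>k. norm (column k X) = 1"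
    and "lam > 0"
    and "\<forall>k. s $ k \<ge> 0"
    and "psd_mat (transpose X ** X - diag_mat s)"
    and "transpose Xt ** X = transpose X ** X - diag_mat s"
    and "\<forall>k. column k Xt \<bullet> column k Xt = 1"
    and "\<beta> $ j = 0"
  shows "(let Sinv = matrix_inv (transpose X ** X + lam *\<^sub>R mat 1);
              y = (\<lambda>\<omega>. X *v \<beta> + z \<omega>);
              bhat = (\<lambda>\<omega>. (Sinv *v (transpose X *v y \<omega>)) $ j);
              btil = (\<lambda>\<omega>. bhat \<omega> + (Sinv $ j $ j) *
                              (column j Xt \<bullet> y \<omega> - column j X \<bullet> y \<omega>))
          in distr M borel (\<lambda>\<omega>. (bhat \<omega>, btil \<omega>))
             = distr M borel (\<lambda>\<omega>. (btil \<omega>, bhat \<omega>)))"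
proof -
  define Sinv where "Sinv = matrix_inv (transpose X ** X + lam *\<^sub>R mat 1)"
  define c where "c = Sinv $ j $ j"
  define d where "d = column j Xt - column j X"
  define a where "a = X *v Sinv $ j"
  define b where "b = a + c *\<^sub>R d"
  have Xd: "transpose X *v d = - s $ j *\<^sub>R axis j 1"
    unfolding d_def using assms(9) by (rule knockoff_transpose_column_diff)
  have d_mean: "d \<bullet> (X *v \<beta>) = 0"
    using Xd assms(11) by (simp add: inner_commute[of d] inner_matrix_vector_transpose inner_axis)
  have "a \<bullet> d = - c * s $ j"
    using Xd by (simp add: a_def c_def inner_matrix_vector_transpose inner_axis)
  moreover have "d \<bullet> d = 2 * s $ j"
    unfolding d_def using assms(9,5,10) by (intro knockoff_column_diff_inner_self) auto
  ultimately have ab: "a \<bullet> a = b \<bullet> b"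
    by (simp add: b_def inner_add_left inner_add_right inner_commute algebra_simps)
  have "(Sinv *v (transpose X *v y)) $ j = a \<bullet> y" for y
    by (simp only: a_def matrix_vector_mul_component inner_matrix_vector_transpose)
  then have bhat: "(Sinv *v (transpose X *v (X *v \<beta> + w))) $ j = a \<bullet> (X *v \<beta>) + a \<bullet> w" for w
    using inner_add_right by (rule trans)
  have btil: "a \<bullet> (X *v \<beta>) + a \<bullet> w + c * (column j Xt \<bullet> (X *v \<beta> + w) - column j X \<bullet> (X *v \<beta> + w))
      = a \<bullet> (X *v \<beta>) + b \<bullet> w" for w
    using d_mean by (simp add: b_def d_def inner_add_left inner_add_right inner_diff_left algebra_simps)
  show ?thesis
    unfolding Let_def Sinv_def[symmetric] c_def[symmetric] bhat btil
    using assms(3) ab by (rule distr_iso_gauss_inner_swap)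
qed

end
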